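(* Let $\theta$ be supertransversal. Let $\sigma\in\mathcal C_\theta$ be a facet (face of dimension $n_0-1$), let $B_{i,\ell}(\theta)$ be the unique bent hyperplane containing $\sigma$ (neuron $i$ of hidden layer $\ell$), and for each $k\in[L]$ let $S_k\subseteq[n_k]$ be the set of neurons of layer $k$ whose preactivation is strictly positive on the relative interior of $\sigma$. Then $$c_\theta(\sigma)=\Big\|(W^{(1)})^\top D_{S_1}\cdots(W^{(\ell-1)})^\top D_{S_{\ell-1}}(W^{(\ell)})^\top e_i\Big\|_2\; W^{(L+1)}D_{S_L}\cdots W^{(\ell+1)}e_i .$$
   Context: Networks: $\mathcal A=(n_0,\dots,n_{L+1})$, $\theta=(W^{(\ell)},b^{(\ell)})_{\ell\in[L+1]}$, $a^{(0)}=x$, $z^{(\ell)}=W^{(\ell)}a^{(\ell-1)}+b^{(\ell)}$, $a^{(\ell)}=\max(0,z^{(\ell)})$, $f_\theta=W^{(L+1)}a^{(L)}+b^{(L+1)}$. $D_S$: diagonal $0/1$ matrix with $(D_S)_{ii}=1$ iff $i\in S$; $e_i$ standard basis vector. Canonical complex: $\mathcal C_{\theta,0}=\{\mathbb R^{n_0}\}$; for $R\in\mathcal C_{\theta,\ell-1}$, $H_R(\ell,j)=\{x\in\operatorname{aff}(R):z^{(\ell)}_j|_R(x)=0\}$, half-spaces $H^\pm_R(\ell,j)$, $H^0_R=H_R$; $\mathcal C_{\theta,\ell}=\{R\cap\bigcap_jH^{s_j}_R(\ell,j)\}$; $\mathcal C_\theta=\mathcal C_{\theta,L}$; $f_\theta$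 is affine on each polyhedron of $\mathcal C_\theta$. Bent hyperplane $B_{j,\ell}(\theta)=\bigcup\{\{x\in R:z^{(\ell)}_j|_R(x)=0\}:R\in\mathcal C_{\theta,\ell-1},z^{(\ell)}_j|_R\text{ non-constant}\}$. $\theta$ is supertransversal if every face of $\mathcal C_\theta$ of codimension $k$ lies in exactly $k$ bent hyperplanes. Tropical weight: for a facet $\sigma=P\cap Q$ of $\mathcal C_\theta$ with full-dimensional $P,Q$ on which $f_\theta(x)=A_Px+b_P$, resp. $A_Qx+b_Q$, $c_\theta(\sigma)=(A_P-A_Q)e_{P/\sigma}$, where $e_{P/\sigma}$ is the unit vector orthogonal to $\operatorname{aff}(\sigma)$ pointing from $\sigma$ into $P$ (this is independent of the labelling of $P,Q$). *)

theory Defs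
  imports "HOL-Analysis.Analysis"
begin

text \<open>A ReLU network with input space the Euclidean space 'a (so n_0 = DIM('a)).
  depth = L (number of hidden layers); width k = n_k for 1 <= k <= L+1.
  Row j of W^(1) is W1 j :: 'a, so z^(1)_j(x) = W1 j \<bullet> x + bias 1 j.
  For 2 <= k <= L+1, the (j,m) entry of W^(k) is Wt k j m; bias k j is b^(k)_j.\<close>
record 'a net =
  depth :: nat
  width :: "nat \<Rightarrow> nat"
  W1    :: "nat \<Rightarrow> 'a"
  Wt    :: "nat \<Rightarrow> nat \<Rightarrow> nat \<Rightarrow> real"
  bias  :: "nat \<Rightarrow> nat \<Rightarrow> real"

text \<open>Preactivation z^(k)_j(x) for k >= 1 (the value at k = 0 is a dummy).\<close>
fun pre :: "('a::euclidean_space) net \<Rightarrow> nat \<Rightarrow> 'a \<Rightarrow> nat \<Rightarrow> real" where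
  "pre N 0 x j = 0"
| "pre N (Suc 0) x j = W1 N j \<bullet> x + bias N 1 j"
| "pre N (Suc (Suc k)) x j =
     (\<Sum>m<width N (Suc k). Wt N (Suc (Suc k)) j m * max 0 (pre N (Suc k) x m))
     + bias N (Suc (Suc k)) j"

definition fnet :: "('a::euclidean_space) net \<Rightarrow> 'a \<Rightarrow> nat \<Rightarrow> real" where
  "fnet N x = pre N (Suc (depth N)) x"

text \<open>Sign condition: s > 0 gives the closed half-space H^+, s < 0 gives H^-, s = 0 gives H.\<close>
definition sgn_ok :: "int \<Rightarrow> real \<Rightarrow> bool" where
  "sgn_ok s v = (if s > 0 then v \<ge> 0 else if s < 0 then v \<le> 0 else v = 0)"

text \<open>The collections C_{theta,l}. For x in R, the affine extension z_j|_R agrees with z_j,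
  so R \<inter> \<Inter>_j H^{s_j}_R(l,j) = {x \<in> R. each z^(l)_j(x) satisfies its sign condition}.\<close>
fun cplx :: "('a::euclidean_space) net \<Rightarrow> nat \<Rightarrow> 'a set set" where
  "cplx N 0 = {UNIV}"
| "cplx N (Suc l) =
     {{x \<in> R. \<forall>j<width N (Suc l). sgn_ok (s j) (pre N (Suc l) x j)} | R s.
        R \<in> cplx N l \<and> (\<forall>j. s j \<in> {-1, 0, 1})}"

definition cells :: "('a::euclidean_space) net \<Rightarrow> 'a set set" where
  "cells N = {C \<in> cplx N (depth N). C \<noteq> {}}"

text \<open>Bent hyperplane B_{j,l}(theta). An affine function on aff(R) is non-constant iff it
  is non-constant on R.\<close>
definition bent :: "('a::euclidean_space) net \<Rightarrow> nat \<Rightarrow> nat \<Rightarrow> 'a set" where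
  "bent N l j = \<Union>{{x \<in> R. pre N l x j = 0} | R.
      R \<in> cplx N (l - 1) \<and> (\<exists>x\<in>R. \<exists>y\<in>R. pre N l x j \<noteq> pre N l y j)}"

definition supertransversal :: "('a::euclidean_space) net \<Rightarrow> bool" where
  "supertransversal N \<longleftrightarrow>
     (\<forall>F \<in> cells N.
        int (card {(l, j). 1 \<le> l \<and> l \<le> depth N \<and> j < width N l \<and> F \<subseteq> bent N l j})
          = int DIM('a) - aff_dim F)"

definition lin_part :: "('a::euclidean_space) net \<Rightarrow> 'a set \<Rightarrow> (nat \<Rightarrow> 'a \<Rightarrow> real) \<Rightarrow> bool" where
  "lin_part N P A \<longleftrightarrow> (\<forall>j. linear (A j)) \<and>
     (\<exists>b. \<forall>x\<in>P. \<forall>j<width N (Suc (depth N)). fnet N x j = A j x + b j)"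

definition unit_normal :: "('a::euclidean_space) set \<Rightarrow> 'a set \<Rightarrow> 'a \<Rightarrow> bool" where
  "unit_normal \<sigma> P e \<longleftrightarrow> norm e = 1 \<and>
     (\<forall>u\<in>\<sigma>. \<forall>v\<in>\<sigma>. e \<bullet> (u - v) = 0) \<and>
     (\<forall>s\<in>\<sigma>. \<forall>p\<in>P. e \<bullet> (p - s) \<ge> 0)"

definition trop_weight :: "('a::euclidean_space) net \<Rightarrow> 'a set \<Rightarrow> nat \<Rightarrow> real" where
  "trop_weight N \<sigma> = (SOME c. \<exists>P Q A B e.
      P \<in> cells N \<and> Q \<in> cells N \<and> aff_dim P = int DIM('a) \<and> aff_dim Q = int DIM('a) \<and>
      P \<noteq> Q \<and> \<sigma> = P \<inter> Q \<and> lin_part N P A \<and> lin_part N Q B \<and> unit_normal \<sigma> P e \<and>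
      c = (\<lambda>j. if j < width N (Suc (depth N)) then A j e - B j e else 0))"

definition Sset :: "('a::euclidean_space) net \<Rightarrow> 'a set \<Rightarrow> nat \<Rightarrow> nat set" where
  "Sset N \<sigma> k = {j. j < width N k \<and> (\<forall>x\<in>rel_interior \<sigma>. 0 < pre N k x j)}"

text \<open>backv N S l i d: the vector D_{S_{l-d}} (W^(l-d+1))^T ... D_{S_{l-1}} (W^(l))^T e_i
  in R^{n_{l-d}} (d = 0 gives e_i in R^{n_l}).\<close>
fun backv :: "('a::euclidean_space) net \<Rightarrow> (nat \<Rightarrow> nat set) \<Rightarrow> nat \<Rightarrow> nat \<Rightarrow> nat \<Rightarrow> nat \<Rightarrow> real" where
  "backv N S l i 0 = (\<lambda>j. if j = i then 1 else 0)"
| "backv N S l i (Suc d) = (\<lambda>j. if j \<in> S (l - Suc d)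
      then (\<Sum>m<width N (l - d). Wt N (l - d) m j * backv N S l i d m) else 0)"

text \<open>(W^(1))^T D_{S_1} ... (W^(l-1))^T D_{S_{l-1}} (W^(l))^T e_i, a vector in R^{n_0}.\<close>
definition back_input :: "('a::euclidean_space) net \<Rightarrow> (nat \<Rightarrow> nat set) \<Rightarrow> nat \<Rightarrow> nat \<Rightarrow> 'a" where
  "back_input N S l i = (\<Sum>m<width N 1. backv N S l i (l - 1) m *\<^sub>R W1 N m)"

text \<open>fwdv N S l i d: W^(l+d) D_{S_{l+d-1}} ... D_{S_{l+1}} W^(l+1) e_i in R^{n_{l+d}}
  (d = 0 gives e_i in R^{n_l}; no mask is applied to e_i itself).\<close>
fun fwdv :: "('a::euclidean_space) net \<Rightarrow> (nat \<Rightarrow> nat set) \<Rightarrow> nat \<Rightarrow> nat \<Rightarrow> nat \<Rightarrow> nat \<Rightarrow> real" where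
  "fwdv N S l i 0 = (\<lambda>j. if j = i then 1 else 0)"
| "fwdv N S l i (Suc d) = (\<lambda>j. \<Sum>m<width N (l + d).
      Wt N (l + d + 1) j m * (if d = 0 \<or> m \<in> S (l + d) then fwdv N S l i d m else 0))"

definition fwd_output :: "('a::euclidean_space) net \<Rightarrow> (nat \<Rightarrow> nat set) \<Rightarrow> nat \<Rightarrow> nat \<Rightarrow> nat \<Rightarrow> real" where
  "fwd_output N S l i = fwdv N S l i (Suc (depth N) - l)"

end

theory Submission
  imports Defs
begin

text \<open>Write \<sigma> as the cell of a sign pattern s and fix x0 in its relative interior.
  Near x0 every neuron other than (l, i) keeps the sign it has at x0. For a neuron vanishing at x0
  this is where supertransversality enters: such a neuron is constant on the cells obtained from s
  by giving (l, i) a definite sign, for otherwise \<sigma> would lie in its bent hyperplane as well.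
  Hence near x0 the network evaluates with the frozen activation pattern S = Sset N \<sigma>, the
  preactivation of (l, i) is g \<bullet> (y - x0) with g = (W^(1))^T D_{S_1} ... (W^(l))^T e_i, and every
  cell through x0 is locally a closed half-space bounded by the hyperplane g \<bullet> (y - x0) = 0, or
  that hyperplane itself.

  Let P, Q be the full-dimensional cells with \<sigma> = P \<inter> Q and e the unit normal of \<sigma> pointing
  into P. The points y+ = x0 + t e and y- = x0 - t e lie in P and Q, so the second difference
  f(y+) + f(y-) - 2 f(x0) is t (A_P - A_Q) e. Computed through the network, it vanishes below
  layer l, equals |g \<bullet> t e| = t |g| at neuron (l, i) and 0 at the other neurons of layer l, and
  is then propagated linearly by the masked weight matrices W^(k+1) D_{S_k}.\<close>

section \<open>Sign conditions and convex sets\<close>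

lemma sgn_ok_0 [simp]: "sgn_ok s 0"
  by (simp add: sgn_ok_def)

lemma max_0_if_sgn_ok: "sgn_ok s v \<Longrightarrow> max 0 v = (if s > 0 then v else 0)"
  by (auto simp: sgn_ok_def split: if_splits)

lemma sgn_ok_sgn_cong: "sgn a = sgn b \<Longrightarrow> sgn_ok s a = sgn_ok s b"
  by (auto simp: sgn_ok_def sgn_if split: if_splits)

lemma sgn_ok_pos_mult_iff: "0 < c \<Longrightarrow> sgn_ok s (c * v) \<longleftrightarrow> sgn_ok s v"
  by (simp add: sgn_ok_def zero_le_mult_iff mult_le_0_iff)

lemma sgn_ok_neg_mult_imp_0: "sgn_ok s (c * v) \<Longrightarrow> sgn_ok s v \<Longrightarrow> c < 0 \<Longrightarrow> v = 0"
  by (auto simp: sgn_ok_def zero_le_mult_iff mult_le_0_iff split: if_splits)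

lemma sgn_ok_if_mult_nonneg: "v \<in> {-1, 1} \<Longrightarrow> 0 \<le> of_int v * a \<Longrightarrow> sgn_ok v a"
  by (auto simp: sgn_ok_def)

lemma sgn_ok_convex_comb:
  "sgn_ok s p \<Longrightarrow> sgn_ok s q \<Longrightarrow> 0 \<le> a \<Longrightarrow> 0 \<le> b \<Longrightarrow> sgn_ok s (a * p + b * q)"
  by (auto simp: sgn_ok_def split: if_splits intro: add_nonneg_nonneg mult_nonneg_nonneg
      add_nonpos_nonpos mult_nonneg_nonpos)

lemma affine_sgn_ok_vanishes_on_convex:
  fixes C :: "'a::euclidean_space set"
  assumes "convex C" "x \<in> rel_interior C" "\<forall>y\<in>C. sgn_ok s (a \<bullet> y + c)" "a \<bullet> x + c = 0"
    and "y \<in> C"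
  shows "a \<bullet> y + c = 0"
proof -
  obtain e where e: "e > 1" "(1 - e) *\<^sub>R y + e *\<^sub>R x \<in> C"
    using convex_rel_interior_iff[OF assms(1)] assms(2,5) by blast
  have "a \<bullet> ((1 - e) *\<^sub>R y + e *\<^sub>R x) + c = (1 - e) * (a \<bullet> y + c) + e * (a \<bullet> x + c)"
    by (simp add: inner_add_right algebra_simps)
  then have "sgn_ok s ((1 - e) * (a \<bullet> y + c))"
    using assms(3,4) e(2) by fastforce
  then show ?thesis
    using sgn_ok_neg_mult_imp_0 assms(3,5) e(1) by fastforce
qed

lemma convex_small_step:
  fixes x p :: "'a::real_normed_vector"
  assumes "convex C" "x \<in> C" "p \<in> C" "r > 0"
  obtains \<epsilon> where "\<epsilon> > 0" "x + \<epsilon> *\<^sub>R (p - x) \<in> C" "x + \<epsilon> *\<^sub>R (p - x) \<in> ball x r"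
proof
  define \<epsilon> where "\<epsilon> = min 1 (r / (2 * (norm (p - x) + 1)))"
  have den: "0 < 2 * (norm (p - x) + 1)"
    by (simp add: add_nonneg_pos)
  show pos: "\<epsilon> > 0"
    using assms(4) den by (simp add: \<epsilon>_def)
  have "x + \<epsilon> *\<^sub>R (p - x) = (1 - \<epsilon>) *\<^sub>R x + \<epsilon> *\<^sub>R p"
    by (simp add: algebra_simps)
  then show "x + \<epsilon> *\<^sub>R (p - x) \<in> C"
    using convexD[OF assms(1-3)] pos by (simp add: \<epsilon>_def)
  have "\<epsilon> * norm (p - x) \<le> r / (2 * (norm (p - x) + 1)) * norm (p - x)"
    using pos by (intro mult_right_mono) (auto simp: \<epsilon>_def)
  also have "\<dots> < r"
    using assms(4) den by (simp add: field_simps add_pos_nonneg)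
  finally show "x + \<epsilon> *\<^sub>R (p - x) \<in> ball x r"
    using pos by (simp add: dist_norm)
qed

lemma abs_inner_eq_norm_if_orthogonal_kernel:
  fixes g e :: "'a::real_inner"
  assumes "norm e = 1" "g \<noteq> 0" "\<And>w. g \<bullet> w = 0 \<Longrightarrow> e \<bullet> w = 0"
  shows "\<bar>g \<bullet> e\<bar> = norm g"
proof -
  define w where "w = e - ((e \<bullet> g) / (g \<bullet> g)) *\<^sub>R g"
  have gg: "g \<bullet> g \<noteq> 0"
    using assms(2) by simp
  have "g \<bullet> w = 0"
    using gg by (simp add: w_def inner_diff_right inner_commute)
  then have "e \<bullet> w = 0"
    by (rule assms(3))
  then have "e \<bullet> e = (e \<bullet> g) * (e \<bullet> g) / (g \<bullet> g)"
    by (simp add: w_def inner_diff_right)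
  then have "(g \<bullet> e)\<^sup>2 = (norm g)\<^sup>2"
    using assms(1) gg
    by (simp add: power2_norm_eq_inner[symmetric] power2_eq_square field_simps inner_commute)
  then show ?thesis
    by (metis abs_norm_cancel power2_abs power2_eq_iff_nonneg abs_ge_zero norm_ge_zero)
qed

section \<open>Sign cells and frozen activation patterns\<close>

definition sign_pattern :: "(nat \<Rightarrow> nat \<Rightarrow> int) \<Rightarrow> bool" where
  "sign_pattern s \<longleftrightarrow> (\<forall>k j. s k j \<in> {-1, 0, 1})"

definition sign_cell :: "('a::euclidean_space) net \<Rightarrow> (nat \<Rightarrow> nat \<Rightarrow> int) \<Rightarrow> nat \<Rightarrow> 'a set" where
  "sign_cell N s l =
     {x. \<forall>k j. 1 \<le> k \<longrightarrow> k \<le> l \<longrightarrow> j < width N k \<longrightarrow> sgn_ok (s k j) (pre N k x j)}"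

lemma sign_cellD:
  "x \<in> sign_cell N s K \<Longrightarrow> 1 \<le> k \<Longrightarrow> k \<le> K \<Longrightarrow> j < width N k \<Longrightarrow> sgn_ok (s k j) (pre N k x j)"
  unfolding sign_cell_def by blast

lemma sign_cell_antimono: "K \<le> L \<Longrightarrow> sign_cell N s L \<subseteq> sign_cell N s K"
  by (auto simp: sign_cell_def)

lemma sign_cell_Suc:
  "sign_cell N s (Suc K) =
     {x \<in> sign_cell N s K. \<forall>j<width N (Suc K). sgn_ok (s (Suc K) j) (pre N (Suc K) x j)}"
  by (auto simp: sign_cell_def le_Suc_eq)

lemma cplx_eq_sign_cells: "cplx N l = {sign_cell N s l | s. sign_pattern s}"
proof (induction l)
  case 0
  show ?case
    by (auto simp: sign_cell_def sign_pattern_def intro!: exI[of _ "\<lambda>_ _. 0"])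
next
  case (Suc l)
  show ?case
  proof (rule set_eqI, rule iffI)
    fix C assume "C \<in> cplx N (Suc l)"
    then obtain s t where s: "sign_pattern s" and t: "\<forall>j. t j \<in> {-1, 0, 1}"
      and C: "C = {x \<in> sign_cell N s l. \<forall>j<width N (Suc l). sgn_ok (t j) (pre N (Suc l) x j)}"
      using Suc.IH by auto
    have "sign_pattern (s(Suc l := t))"
      using s t by (simp add: sign_pattern_def)
    moreover have "C = sign_cell N (s(Suc l := t)) (Suc l)"
      unfolding C sign_cell_Suc by (auto simp: sign_cell_def)
    ultimately show "C \<in> {sign_cell N s (Suc l) | s. sign_pattern s}"
      by blast
  next
    fix C assume "C \<in> {sign_cell N s (Suc l) | s. sign_pattern s}"
    then obtain s where "sign_pattern s" "C = sign_cell N s (Suc l)"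
      by blast
    then show "C \<in> cplx N (Suc l)"
      using Suc.IH unfolding sign_cell_Suc by (auto simp: sign_pattern_def)
  qed
qed

lemma cellsE:
  assumes "P \<in> cells N"
  obtains s where "sign_pattern s" "P = sign_cell N s (depth N)"
  using assms cplx_eq_sign_cells[of N "depth N"] unfolding cells_def by auto

lemma sign_cell_in_cells:
  "sign_pattern s \<Longrightarrow> x \<in> sign_cell N s (depth N) \<Longrightarrow> sign_cell N s (depth N) \<in> cells N"
  using cplx_eq_sign_cells[of N "depth N"] unfolding cells_def by auto

lemma pre_Suc:
  "1 \<le> k \<Longrightarrow> pre N (Suc k) x j =
     (\<Sum>m<width N k. Wt N (Suc k) j m * max 0 (pre N k x m)) + bias N (Suc k) j"
  by (cases k) auto

lemma isCont_pre: "isCont (\<lambda>y. pre N k y j) x"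
  by (induction N k x j rule: pre.induct) (auto intro!: continuous_intros)

text \<open>frozen_weight N T k j \<bullet> x + frozen_bias N T k j is the preactivation of neuron j of layer k
  computed as if every neuron m of an earlier layer k' were the identity for m \<in> T k' and zero
  otherwise.\<close>

fun frozen_weight :: "('a::euclidean_space) net \<Rightarrow> (nat \<Rightarrow> nat set) \<Rightarrow> nat \<Rightarrow> nat \<Rightarrow> 'a" where
  "frozen_weight N T 0 j = 0"
| "frozen_weight N T (Suc 0) j = W1 N j"
| "frozen_weight N T (Suc (Suc k)) j = (\<Sum>m<width N (Suc k).
     (if m \<in> T (Suc k) then Wt N (Suc (Suc k)) j m else 0) *\<^sub>R frozen_weight N T (Suc k) m)"

fun frozen_bias :: "('a::euclidean_space) net \<Rightarrow> (nat \<Rightarrow> nat set) \<Rightarrow> nat \<Rightarrow> nat \<Rightarrow> real" where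
  "frozen_bias N T 0 j = 0"
| "frozen_bias N T (Suc 0) j = bias N 1 j"
| "frozen_bias N T (Suc (Suc k)) j = (\<Sum>m<width N (Suc k).
     (if m \<in> T (Suc k) then Wt N (Suc (Suc k)) j m * frozen_bias N T (Suc k) m else 0))
     + bias N (Suc (Suc k)) j"

definition follows_pattern :: "('a::euclidean_space) net \<Rightarrow> (nat \<Rightarrow> nat set) \<Rightarrow> nat \<Rightarrow> 'a \<Rightarrow> bool" where
  "follows_pattern N T K x \<longleftrightarrow> (\<forall>k m. 1 \<le> k \<longrightarrow> k \<le> K \<longrightarrow> m < width N k \<longrightarrow>
     max 0 (pre N k x m) = (if m \<in> T k then pre N k x m else 0))"

lemma follows_patternD:
  "follows_pattern N T K x \<Longrightarrow> 1 \<le> k \<Longrightarrow> k \<le> K \<Longrightarrow> m < width N k \<Longrightarrow>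
    max 0 (pre N k x m) = (if m \<in> T k then pre N k x m else 0)"
  unfolding follows_pattern_def by blast

lemma pre_eq_frozen_affine:
  assumes "follows_pattern N T K x" "1 \<le> k" "k \<le> Suc K"
  shows "pre N k x j = frozen_weight N T k j \<bullet> x + frozen_bias N T k j"
  using assms
proof (induction N T k j rule: frozen_weight.induct)
  case (2 N T j)
  then show ?case
    by (simp add: inner_commute)
next
  case (3 N T k j)
  have relu: "max 0 (pre N (Suc k) x m) = (if m \<in> T (Suc k) then pre N (Suc k) x m else 0)"
    if "m < width N (Suc k)" for m
    by (rule follows_patternD[OF "3.prems"(1)]) (use "3.prems" that in auto)
  have "pre N (Suc (Suc k)) x j
      = (\<Sum>m<width N (Suc k). Wt N (Suc (Suc k)) j m * max 0 (pre N (Suc k) x m)) + bias N (Suc (Suc k)) j"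
    by simp
  also have "\<dots> = (\<Sum>m<width N (Suc k). Wt N (Suc (Suc k)) j m * (if m \<in> T (Suc k)
      then frozen_weight N T (Suc k) m \<bullet> x + frozen_bias N T (Suc k) m else 0)) + bias N (Suc (Suc k)) j"
    using relu "3.IH" "3.prems" by (intro arg_cong2[where f="(+)"] sum.cong) auto
  also have "\<dots> = frozen_weight N T (Suc (Suc k)) j \<bullet> x + frozen_bias N T (Suc (Suc k)) j"
    by (simp add: inner_sum_left flip: sum.distrib) (rule sum.cong; simp add: algebra_simps)
  finally show ?case .
qed simp

definition pos_set :: "(nat \<Rightarrow> nat \<Rightarrow> int) \<Rightarrow> nat \<Rightarrow> nat set" where
  "pos_set s k = {m. s k m > 0}"

lemma follows_pattern_sign_cell:
  assumes "x \<in> sign_cell N s K"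
  shows "follows_pattern N (pos_set s) K x"
  unfolding follows_pattern_def
proof (intro allI impI)
  fix k m assume "1 \<le> k" "k \<le> K" "m < width N k"
  then have "sgn_ok (s k m) (pre N k x m)"
    using assms by (simp add: sign_cell_def)
  then show "max 0 (pre N k x m) = (if m \<in> pos_set s k then pre N k x m else 0)"
    by (simp add: max_0_if_sgn_ok pos_set_def)
qed

lemma pre_affine_on_sign_cell:
  "x \<in> sign_cell N s K \<Longrightarrow> 1 \<le> k \<Longrightarrow> k \<le> Suc K \<Longrightarrow>
    pre N k x j = frozen_weight N (pos_set s) k j \<bullet> x + frozen_bias N (pos_set s) k j"
  using pre_eq_frozen_affine follows_pattern_sign_cell by blast

lemma sign_cell_eq_affine_constraints:
  "sign_cell N s K = {x. \<forall>k j. 1 \<le> k \<longrightarrow> k \<le> K \<longrightarrow> j < width N k \<longrightarrow>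
     sgn_ok (s k j) (frozen_weight N (pos_set s) k j \<bullet> x + frozen_bias N (pos_set s) k j)}"
proof (induction K)
  case 0
  show ?case
    by (simp add: sign_cell_def)
next
  case (Suc K)
  have "sign_cell N s (Suc K) = {x \<in> sign_cell N s K. \<forall>j<width N (Suc K). sgn_ok (s (Suc K) j)
      (frozen_weight N (pos_set s) (Suc K) j \<bullet> x + frozen_bias N (pos_set s) (Suc K) j)}"
    unfolding sign_cell_Suc using pre_affine_on_sign_cell[of _ N s K "Suc K"] by auto
  also have "\<dots> = {x. \<forall>k j. 1 \<le> k \<longrightarrow> k \<le> Suc K \<longrightarrow> j < width N k \<longrightarrow>
     sgn_ok (s k j) (frozen_weight N (pos_set s) k j \<bullet> x + frozen_bias N (pos_set s) k j)}"
    unfolding Suc.IH by (auto simp: le_Suc_eq)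
  finally show ?case .
qed

lemma convex_sgn_ok_affine: "convex {x. sgn_ok v (a \<bullet> x + c)}"
proof (rule convexI)
  fix x y and \<alpha> \<beta> :: real
  assume "x \<in> {x. sgn_ok v (a \<bullet> x + c)}" "y \<in> {x. sgn_ok v (a \<bullet> x + c)}"
    and \<alpha>\<beta>: "0 \<le> \<alpha>" "0 \<le> \<beta>" "\<alpha> + \<beta> = 1"
  moreover have "a \<bullet> (\<alpha> *\<^sub>R x + \<beta> *\<^sub>R y) + c = \<alpha> * (a \<bullet> x + c) + \<beta> * (a \<bullet> y + c)"
    using \<alpha>\<beta>(3) by (simp add: inner_add_right algebra_simps flip: distrib_right)
  ultimately show "\<alpha> *\<^sub>R x + \<beta> *\<^sub>R y \<in> {x. sgn_ok v (a \<bullet> x + c)}"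
    using sgn_ok_convex_comb by simp
qed

lemma convex_sign_cell: "convex (sign_cell N s K)"
proof -
  have "sign_cell N s K = (\<Inter>k\<in>{1..K}. \<Inter>j\<in>{..<width N k}.
      {x. sgn_ok (s k j) (frozen_weight N (pos_set s) k j \<bullet> x + frozen_bias N (pos_set s) k j)})"
    unfolding sign_cell_eq_affine_constraints by auto
  then show ?thesis
    by (simp add: convex_INT convex_sgn_ok_affine)
qed

lemma lin_part_sign_cell:
  "lin_part N (sign_cell N t (depth N)) (\<lambda>j x. frozen_weight N (pos_set t) (Suc (depth N)) j \<bullet> x)"
  unfolding lin_part_def
proof (intro conjI allI exI ballI impI)
  fix j
  show "linear (\<lambda>x. frozen_weight N (pos_set t) (Suc (depth N)) j \<bullet> x)"
    by (rule bounded_linear_inner_right[THEN bounded_linear.linear])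
next
  fix x j assume "x \<in> sign_cell N t (depth N)"
  then show "fnet N x j =
      frozen_weight N (pos_set t) (Suc (depth N)) j \<bullet> x + frozen_bias N (pos_set t) (Suc (depth N)) j"
    unfolding fnet_def by (intro pre_affine_on_sign_cell) auto
qed

lemma frozen_weight_eq_backv_sum:
  assumes "1 \<le> l" "i < width N l" "d \<le> l - 1"
  shows "frozen_weight N T l i = (\<Sum>m<width N (l - d). backv N T l i d m *\<^sub>R frozen_weight N T (l - d) m)"
  using assms(3)
proof (induction d)
  case 0
  have "(\<Sum>m<width N l. backv N T l i 0 m *\<^sub>R frozen_weight N T l m)
      = (\<Sum>m<width N l. if m = i then frozen_weight N T l m else 0)"
    by (intro sum.cong) auto
  then show ?case
    using assms(2) by simp
next
  case (Suc d)
  define q where "q = l - d - 2"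
  have q: "l - d = Suc (Suc q)"
    using Suc.prems unfolding q_def by arith
  then have q': "l - Suc d = Suc q"
    by simp
  have "frozen_weight N T l i = (\<Sum>m<width N (l - d). backv N T l i d m *\<^sub>R frozen_weight N T (l - d) m)"
    using Suc by simp
  also have "\<dots> = (\<Sum>m<width N (l - d). \<Sum>m'<width N (Suc q).
      (backv N T l i d m * (if m' \<in> T (Suc q) then Wt N (l - d) m m' else 0)) *\<^sub>R frozen_weight N T (Suc q) m')"
    unfolding q by (simp add: scaleR_sum_right)
  also have "\<dots> = (\<Sum>m'<width N (Suc q). \<Sum>m<width N (l - d).
      (backv N T l i d m * (if m' \<in> T (Suc q) then Wt N (l - d) m m' else 0)) *\<^sub>R frozen_weight N T (Suc q) m')"
    by (rule sum.swap)
  also have "\<dots> = (\<Sum>m'<width N (Suc q). backv N T l i (Suc d) m' *\<^sub>R frozen_weight N T (Suc q) m')"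
    by (intro sum.cong refl) (simp add: q' scaleR_sum_left[symmetric] sum_distrib_left algebra_simps)
  finally show ?case
    using q' by simp
qed

lemma frozen_weight_eq_back_input:
  "1 \<le> l \<Longrightarrow> i < width N l \<Longrightarrow> frozen_weight N T l i = back_input N T l i"
  using frozen_weight_eq_backv_sum[of l i N "l - 1" T] by (simp add: back_input_def)

lemma pre_Suc_second_difference:
  "1 \<le> k \<Longrightarrow> pre N (Suc k) a j + pre N (Suc k) b j - 2 * pre N (Suc k) c j =
    (\<Sum>m<width N k. Wt N (Suc k) j m *
       (max 0 (pre N k a m) + max 0 (pre N k b m) - 2 * max 0 (pre N k c m)))"
  by (simp add: pre_Suc algebra_simps sum.distrib sum_subtractf sum_distrib_left)

section \<open>Bent hyperplanes and tropical weights\<close>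

lemma pre_eq_0_if_bent: "x \<in> bent N l i \<Longrightarrow> pre N l x i = 0"
  by (auto simp: bent_def)

lemma subset_bentI:
  "R \<in> cplx N (k - 1) \<Longrightarrow> \<sigma> \<subseteq> R \<Longrightarrow> \<forall>y\<in>\<sigma>. pre N k y m = 0 \<Longrightarrow> u \<in> R \<Longrightarrow> w \<in> R \<Longrightarrow>
    pre N k u m \<noteq> pre N k w m \<Longrightarrow> \<sigma> \<subseteq> bent N k m"
  unfolding bent_def by blast

lemma supertransversal_facet_unique_bent:
  fixes \<sigma> :: "'a::euclidean_space set"
  assumes "supertransversal N" "\<sigma> \<in> cells N" "aff_dim \<sigma> = int DIM('a) - 1"
    and "1 \<le> l" "l \<le> depth N" "i < width N l" "\<sigma> \<subseteq> bent N l i"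
    and "1 \<le> k" "k \<le> depth N" "m < width N k" "\<sigma> \<subseteq> bent N k m"
  shows "(k, m) = (l, i)"
proof -
  let ?B = "{(l, j). 1 \<le> l \<and> l \<le> depth N \<and> j < width N l \<and> \<sigma> \<subseteq> bent N l j}"
  have "int (card ?B) = int DIM('a) - aff_dim \<sigma>"
    using assms(1,2) unfolding supertransversal_def by blast
  then have "card ?B = 1"
    using assms(3) by simp
  then obtain p where "?B = {p}"
    by (rule card_1_singletonE)
  moreover have "(l, i) \<in> ?B" "(k, m) \<in> ?B"
    using assms(4-11) by auto
  ultimately show ?thesis
    by auto
qed

definition tropical_witness ::
    "('a::euclidean_space) net \<Rightarrow> 'a set \<Rightarrow> 'a set \<Rightarrow> 'a set \<Rightarrow> (nat \<Rightarrow> 'a \<Rightarrow> real) \<Rightarrow>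
      (nat \<Rightarrow> 'a \<Rightarrow> real) \<Rightarrow> 'a \<Rightarrow> bool" where
  "tropical_witness N \<sigma> P Q A B e \<longleftrightarrow>
     P \<in> cells N \<and> Q \<in> cells N \<and> aff_dim P = int DIM('a) \<and> aff_dim Q = int DIM('a) \<and>
     P \<noteq> Q \<and> \<sigma> = P \<inter> Q \<and> lin_part N P A \<and> lin_part N Q B \<and> unit_normal \<sigma> P e"

lemma trop_weight_eqI:
  assumes "\<exists>P Q A B e. tropical_witness N \<sigma> P Q A B e"
    and "\<And>P Q A B e j. tropical_witness N \<sigma> P Q A B e \<Longrightarrow> j < width N (Suc (depth N)) \<Longrightarrow>
      A j e - B j e = c j"
    and "j < width N (Suc (depth N))"
  shows "trop_weight N \<sigma> j = c j"
proof -
  let ?W = "\<lambda>c. \<exists>P Q A B e. tropical_witness N \<sigma> P Q A B e \<and>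
    c = (\<lambda>j. if j < width N (Suc (depth N)) then A j e - B j e else 0)"
  have "\<exists>c. ?W c"
    using assms(1) by blast
  then have "?W (trop_weight N \<sigma>)"
    unfolding trop_weight_def tropical_witness_def conj_assoc by (rule someI_ex)
  then show ?thesis
    using assms(2,3) by auto
qed

section \<open>Local structure of the complex at a facet\<close>

locale bent_facet =
  fixes N :: "('a::euclidean_space) net" and \<sigma> :: "'a set" and l i :: nat
    and s :: "nat \<Rightarrow> nat \<Rightarrow> int" and x0 :: 'a
  assumes pattern: "sign_pattern s" and \<sigma>_eq: "\<sigma> = sign_cell N s (depth N)"
    and facet_dim: "aff_dim \<sigma> = int DIM('a) - 1"
    and layer: "1 \<le> l" "l \<le> depth N" and neuron: "i < width N l"
    and in_bent: "\<sigma> \<subseteq> bent N l i"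
    and unique_bent:
      "\<And>k m. 1 \<le> k \<Longrightarrow> k \<le> depth N \<Longrightarrow> m < width N k \<Longrightarrow> \<sigma> \<subseteq> bent N k m \<Longrightarrow> (k, m) = (l, i)"
    and x0_rel_interior: "x0 \<in> rel_interior \<sigma>"
begin

lemma convex_facet: "convex \<sigma>"
  using \<sigma>_eq convex_sign_cell by simp

lemma x0_in_facet: "x0 \<in> \<sigma>"
  using x0_rel_interior rel_interior_subset by blast

lemma pre_bent_neuron_eq_0: "y \<in> \<sigma> \<Longrightarrow> pre N l y i = 0"
  using in_bent pre_eq_0_if_bent by blast

lemma pre_vanishes_on_facet:
  assumes "1 \<le> k" "k \<le> depth N" "m < width N k" "x \<in> rel_interior \<sigma>" "pre N k x m = 0"
    and "y \<in> \<sigma>"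
  shows "pre N k y m = 0"
proof -
  let ?a = "frozen_weight N (pos_set s) k m" and ?c = "frozen_bias N (pos_set s) k m"
  have affine: "pre N k z m = ?a \<bullet> z + ?c" if "z \<in> \<sigma>" for z
  proof (rule pre_affine_on_sign_cell)
    show "z \<in> sign_cell N s (k - 1)"
      using that \<sigma>_eq sign_cell_antimono[of "k - 1" "depth N" N s] assms(2)
      by (metis diff_le_self le_trans subsetD)
  qed (use assms(1) in auto)
  have signs: "\<forall>z\<in>\<sigma>. sgn_ok (s k m) (?a \<bullet> z + ?c)"
  proof
    fix z assume "z \<in> \<sigma>"
    then show "sgn_ok (s k m) (?a \<bullet> z + ?c)"
      using sign_cellD[of z N s "depth N" k m] assms(1-3) affine \<sigma>_eq by simp
  qed
  have "x \<in> \<sigma>"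
    using assms(4) rel_interior_subset by blast
  then have "?a \<bullet> x + ?c = 0"
    using affine assms(5) by simp
  then have "?a \<bullet> y + ?c = 0"
    by (rule affine_sgn_ok_vanishes_on_convex[OF convex_facet assms(4) signs _ assms(6)])
  then show ?thesis
    using affine assms(6) by simp
qed

lemma Sset_iff:
  assumes "1 \<le> k" "k \<le> depth N"
  shows "m \<in> Sset N \<sigma> k \<longleftrightarrow> m < width N k \<and> 0 < pre N k x0 m"
proof
  assume "m \<in> Sset N \<sigma> k"
  then show "m < width N k \<and> 0 < pre N k x0 m"
    using x0_rel_interior by (auto simp: Sset_def)
next
  assume m: "m < width N k \<and> 0 < pre N k x0 m"
  have "0 < pre N k x m" if x: "x \<in> rel_interior \<sigma>" for x
  proof (rule ccontr)
    assume not_pos: "\<not> 0 < pre N k x m"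
    have "x \<in> \<sigma>"
      using x rel_interior_subset by blast
    then have "sgn_ok (s k m) (pre N k x0 m)" "sgn_ok (s k m) (pre N k x m)"
      using x0_in_facet \<sigma>_eq assms m by (auto simp: sign_cell_def)
    then have "pre N k x m = 0"
      using m not_pos by (auto simp: sgn_ok_def split: if_splits)
    then have "pre N k x0 m = 0"
      using pre_vanishes_on_facet[OF assms m[THEN conjunct1] x _ x0_in_facet] by blast
    then show False
      using m by simp
  qed
  then show "m \<in> Sset N \<sigma> k"
    using m by (auto simp: Sset_def)
qed

text \<open>For v = 1 and v = -1 the cells of side_pattern v are the two full-dimensional cells meeting
  in \<sigma>; the cells of side_pattern v at lower levels are what supertransversality is tested on.\<close>

definition side_pattern :: "int \<Rightarrow> nat \<Rightarrow> nat \<Rightarrow> int" where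
  "side_pattern v = s(l := (s l)(i := v))"

lemma sign_pattern_side: "v \<in> {-1, 0, 1} \<Longrightarrow> sign_pattern (side_pattern v)"
  using pattern by (auto simp: sign_pattern_def side_pattern_def)

lemma facet_subset_side: "K \<le> depth N \<Longrightarrow> \<sigma> \<subseteq> sign_cell N (side_pattern v) K"
  using pre_bent_neuron_eq_0 \<sigma>_eq by (auto simp: sign_cell_def side_pattern_def)

definition same_sign_below :: "nat \<Rightarrow> 'a \<Rightarrow> bool" where
  "same_sign_below K y \<longleftrightarrow> (\<forall>k m. 1 \<le> k \<longrightarrow> k \<le> K \<longrightarrow> m < width N k \<longrightarrow> (k, m) \<noteq> (l, i) \<longrightarrow>
     sgn (pre N k y m) = sgn (pre N k x0 m))"

lemma sign_cell_if_same_sign_below: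
  assumes "x0 \<in> sign_cell N t K" "same_sign_below K y" "l \<le> K \<longrightarrow> sgn_ok (t l i) (pre N l y i)"
  shows "y \<in> sign_cell N t K"
  unfolding sign_cell_def mem_Collect_eq
proof (intro allI impI)
  fix k j assume k: "1 \<le> k" "k \<le> K" "j < width N k"
  show "sgn_ok (t k j) (pre N k y j)"
  proof (cases "(k, j) = (l, i)")
    case True
    then show ?thesis
      using assms(3) k by auto
  next
    case False
    then have "sgn (pre N k y j) = sgn (pre N k x0 j)"
      using assms(2) k unfolding same_sign_below_def by blast
    moreover have "sgn_ok (t k j) (pre N k x0 j)"
      using assms(1) k unfolding sign_cell_def by blast
    ultimately show ?thesis
      using sgn_ok_sgn_cong by blast
  qed
qed

lemma pre_constant_on_side_cell:
  assumes "Suc K \<le> depth N" "m < width N (Suc K)" "(Suc K, m) \<noteq> (l, i)" "pre N (Suc K) x0 m = 0"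
    and "v \<in> {-1, 0, 1}" "u \<in> sign_cell N (side_pattern v) K" "w \<in> sign_cell N (side_pattern v) K"
  shows "pre N (Suc K) u m = pre N (Suc K) w m"
proof (rule ccontr)
  assume "pre N (Suc K) u m \<noteq> pre N (Suc K) w m"
  moreover have "sign_cell N (side_pattern v) K \<in> cplx N (Suc K - 1)"
    using sign_pattern_side[OF assms(5)] cplx_eq_sign_cells by auto
  moreover have "\<forall>y\<in>\<sigma>. pre N (Suc K) y m = 0"
    using pre_vanishes_on_facet[of "Suc K" m x0] assms(1,2,4) x0_rel_interior by auto
  ultimately have "\<sigma> \<subseteq> bent N (Suc K) m"
    using subset_bentI facet_subset_side assms(1,6,7) by (metis Suc_leD)
  then have "(Suc K, m) = (l, i)"
    using assms(1,2) by (intro unique_bent) auto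
  then show False
    using assms(3) by contradiction
qed

lemma eventually_pre_eq_0:
  assumes "eventually (same_sign_below K) (nhds x0)"
    and "Suc K \<le> depth N" "m < width N (Suc K)" "(Suc K, m) \<noteq> (l, i)" "pre N (Suc K) x0 m = 0"
  shows "eventually (\<lambda>y. pre N (Suc K) y m = 0) (nhds x0)"
  using assms(1)
proof (rule eventually_mono)
  fix y assume same: "same_sign_below K y"
  define v :: int where "v = (if pre N l y i \<ge> 0 then 1 else -1)"
  have v: "v \<in> {-1, 0, 1}" "sgn_ok v (pre N l y i)"
    by (auto simp: v_def sgn_ok_def)
  have x0_side: "x0 \<in> sign_cell N (side_pattern v) K"
    using facet_subset_side[of K v] x0_in_facet assms(2) by (meson Suc_leD subsetD)
  have "y \<in> sign_cell N (side_pattern v) K"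
    using v by (intro sign_cell_if_same_sign_below[OF x0_side same]) (simp add: side_pattern_def)
  then show "pre N (Suc K) y m = 0"
    using pre_constant_on_side_cell[OF assms(2-5) v(1) _ x0_side] assms(5) by simp
qed

lemma eventually_same_sgn:
  "pre N k x0 m \<noteq> 0 \<Longrightarrow> eventually (\<lambda>y. sgn (pre N k y m) = sgn (pre N k x0 m)) (nhds x0)"
proof -
  assume nz: "pre N k x0 m \<noteq> 0"
  have lim: "((\<lambda>y. pre N k y m) \<longlongrightarrow> pre N k x0 m) (nhds x0)"
    using isCont_pre[where N = N and k = k and j = m and x = x0] tendsto_at_iff_tendsto_nhds
    unfolding isCont_def by blast
  show ?thesis
  proof (cases "pre N k x0 m > 0")
    case True
    then show ?thesis
      using order_tendstoD(1)[OF lim True] by (auto elim: eventually_mono)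
  next
    case False
    then have neg: "pre N k x0 m < 0"
      using nz by simp
    then show ?thesis
      using order_tendstoD(2)[OF lim neg] by (auto elim: eventually_mono)
  qed
qed

lemma eventually_same_sign_below: "K \<le> depth N \<Longrightarrow> eventually (same_sign_below K) (nhds x0)"
proof (induction K)
  case 0
  show ?case
    by (simp add: same_sign_below_def)
next
  case (Suc K)
  then have IH: "eventually (same_sign_below K) (nhds x0)"
    by simp
  have "eventually (\<lambda>y. sgn (pre N (Suc K) y m) = sgn (pre N (Suc K) x0 m)) (nhds x0)"
    if "m < width N (Suc K)" "(Suc K, m) \<noteq> (l, i)" for m
  proof (cases "pre N (Suc K) x0 m = 0")
    case True
    then show ?thesis
      using eventually_pre_eq_0[OF IH Suc.prems that] by (auto elim: eventually_mono)
  qed (rule eventually_same_sgn)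
  then have "eventually (\<lambda>y. \<forall>m\<in>{m. m < width N (Suc K) \<and> (Suc K, m) \<noteq> (l, i)}.
      sgn (pre N (Suc K) y m) = sgn (pre N (Suc K) x0 m)) (nhds x0)"
    by (intro eventually_ball_finite) auto
  with IH show ?case
    by (rule eventually_elim2) (auto simp: same_sign_below_def le_Suc_eq)
qed

definition radius :: real where
  "radius = (SOME r. 0 < r \<and> (\<forall>y\<in>ball x0 r. same_sign_below (depth N) y))"

lemma radius: "0 < radius" "y \<in> ball x0 radius \<Longrightarrow> same_sign_below (depth N) y"
proof -
  obtain r where "0 < r" "\<forall>y. dist y x0 < r \<longrightarrow> same_sign_below (depth N) y"
    using eventually_same_sign_below[OF le_refl] unfolding eventually_nhds_metric by blast
  then have "0 < r \<and> (\<forall>y\<in>ball x0 r. same_sign_below (depth N) y)"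
    by (simp add: dist_commute)
  then have "0 < radius \<and> (\<forall>y\<in>ball x0 radius. same_sign_below (depth N) y)"
    unfolding radius_def by (rule someI)
  then show "0 < radius" "y \<in> ball x0 radius \<Longrightarrow> same_sign_below (depth N) y"
    by auto
qed

lemma x0_in_ball: "x0 \<in> ball x0 radius"
  using radius(1) by simp

lemma relu_in_ball:
  assumes "y \<in> ball x0 radius" "1 \<le> k" "k \<le> depth N" "m < width N k" "(k, m) \<noteq> (l, i)"
  shows "max 0 (pre N k y m) = (if m \<in> Sset N \<sigma> k then pre N k y m else 0)"
proof -
  have "sgn (pre N k y m) = sgn (pre N k x0 m)"
    using radius(2)[OF assms(1)] assms(2-5) unfolding same_sign_below_def by blast
  moreover have "m \<in> Sset N \<sigma> k \<longleftrightarrow> 0 < pre N k x0 m"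
    using Sset_iff assms(2-4) by simp
  ultimately show ?thesis
    by (auto simp: sgn_if split: if_splits)
qed

lemma pre_affine_in_ball:
  assumes "y \<in> ball x0 radius" "1 \<le> k" "k \<le> l"
  shows "pre N k y j = frozen_weight N (Sset N \<sigma>) k j \<bullet> y + frozen_bias N (Sset N \<sigma>) k j"
proof (rule pre_eq_frozen_affine)
  show "follows_pattern N (Sset N \<sigma>) (l - 1) y"
    unfolding follows_pattern_def
  proof (intro allI impI)
    fix k m assume k: "1 \<le> k" "k \<le> l - 1" "m < width N k"
    show "max 0 (pre N k y m) = (if m \<in> Sset N \<sigma> k then pre N k y m else 0)"
      by (rule relu_in_ball[OF assms(1) k(1) _ k(3)]) (use k(2) layer in auto)
  qed
qed (use assms in auto)

definition grad :: 'a where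
  "grad = frozen_weight N (Sset N \<sigma>) l i"

lemma pre_bent_neuron_in_ball: "y \<in> ball x0 radius \<Longrightarrow> pre N l y i = grad \<bullet> (y - x0)"
  using pre_affine_in_ball[of y l i] pre_affine_in_ball[OF x0_in_ball, of l i] layer
    pre_bent_neuron_eq_0[OF x0_in_facet]
  by (simp add: grad_def inner_diff_right)

lemma sign_cell_ball_iff:
  assumes "x0 \<in> sign_cell N t (depth N)" "y \<in> ball x0 radius"
  shows "y \<in> sign_cell N t (depth N) \<longleftrightarrow> sgn_ok (t l i) (grad \<bullet> (y - x0))"
proof
  assume "y \<in> sign_cell N t (depth N)"
  then show "sgn_ok (t l i) (grad \<bullet> (y - x0))"
    using sign_cellD layer neuron pre_bent_neuron_in_ball[OF assms(2)] by metis
next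
  assume "sgn_ok (t l i) (grad \<bullet> (y - x0))"
  then show "y \<in> sign_cell N t (depth N)"
    using sign_cell_if_same_sign_below[OF assms(1) radius(2)[OF assms(2)]]
      pre_bent_neuron_in_ball[OF assms(2)] by simp
qed

lemma sign_cell_subset_halfspace:
  assumes "x0 \<in> sign_cell N t (depth N)" "p \<in> sign_cell N t (depth N)"
  shows "sgn_ok (t l i) (grad \<bullet> (p - x0))"
proof -
  obtain \<epsilon> where \<epsilon>: "\<epsilon> > 0" "x0 + \<epsilon> *\<^sub>R (p - x0) \<in> sign_cell N t (depth N)"
    "x0 + \<epsilon> *\<^sub>R (p - x0) \<in> ball x0 radius"
    using convex_small_step[OF convex_sign_cell assms radius(1)] by blast
  then have "sgn_ok (t l i) (\<epsilon> * (grad \<bullet> (p - x0)))"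
    using sign_cell_ball_iff[OF assms(1)] by simp
  then show ?thesis
    using sgn_ok_pos_mult_iff[OF \<epsilon>(1)] by simp
qed

definition side :: "int \<Rightarrow> 'a set" where
  "side v = sign_cell N (side_pattern v) (depth N)"

lemma x0_in_side: "x0 \<in> side v"
  using facet_subset_side[of "depth N" v] x0_in_facet by (auto simp: side_def)

lemma side_ball_iff: "y \<in> ball x0 radius \<Longrightarrow> y \<in> side v \<longleftrightarrow> sgn_ok v (grad \<bullet> (y - x0))"
  using sign_cell_ball_iff[OF x0_in_side[unfolded side_def]] by (simp add: side_def side_pattern_def)

lemma side_in_cells: "v \<in> {-1, 0, 1} \<Longrightarrow> side v \<in> cells N"
  using sign_cell_in_cells[OF sign_pattern_side x0_in_side[unfolded side_def]] by (simp add: side_def)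

lemma grad_orthogonal_facet: "a \<in> \<sigma> \<Longrightarrow> grad \<bullet> (a - x0) = 0"
  using sign_cell_subset_halfspace[OF x0_in_side[unfolded side_def], of _ 1]
    sign_cell_subset_halfspace[OF x0_in_side[unfolded side_def], of _ "-1"]
    facet_subset_side[of "depth N"]
  by (fastforce simp: side_pattern_def sgn_ok_def)

lemma grad_nonzero: "grad \<noteq> 0"
proof
  assume "grad = 0"
  then have "ball x0 radius \<subseteq> \<sigma>"
    using sign_cell_ball_iff[of s] x0_in_facet \<sigma>_eq by auto
  then have "aff_dim (ball x0 radius) \<le> aff_dim \<sigma>"
    by (rule aff_dim_subset)
  then show False
    using aff_dim_open[of "ball x0 radius"] radius(1) facet_dim by simp
qed

definition normal :: 'a where
  "normal = grad /\<^sub>R norm grad"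

lemma norm_normal: "norm normal = 1"
  using grad_nonzero by (simp add: normal_def)

lemma inner_grad_normal: "grad \<bullet> normal = norm grad"
  using grad_nonzero by (simp add: normal_def power2_norm_eq_inner[symmetric] power2_eq_square)

definition side_point :: "int \<Rightarrow> 'a" where
  "side_point v = x0 + (of_int v * (radius / 2)) *\<^sub>R normal"

lemma side_point_in_ball: "v \<in> {-1, 1} \<Longrightarrow> side_point v \<in> ball x0 radius"
  using radius(1) norm_normal by (auto simp: side_point_def dist_norm)

lemma inner_grad_side_point: "grad \<bullet> (side_point v - x0) = of_int v * (radius / 2) * norm grad"
  by (simp add: side_point_def inner_grad_normal)

lemma side_point_in_cell:
  assumes "x0 \<in> sign_cell N t (depth N)" "t l i \<in> {-1, 1}"
  shows "side_point (t l i) \<in> sign_cell N t (depth N)"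
proof -
  have "0 \<le> of_int (t l i) * (of_int (t l i) * (radius / 2) * norm grad)"
    using assms(2) radius(1) by auto
  then show ?thesis
    using sign_cell_ball_iff[OF assms(1) side_point_in_ball[OF assms(2)]] assms(2)
    by (simp add: inner_grad_side_point sgn_ok_if_mult_nonneg)
qed

lemma side_point_notin_facet:
  assumes "v \<in> {-1, 1}"
  shows "side_point v \<notin> \<sigma>"
proof
  assume "side_point v \<in> \<sigma>"
  then have "of_int v * (radius / 2) * norm grad = 0"
    using grad_orthogonal_facet inner_grad_side_point by metis
  then show False
    using assms radius(1) grad_nonzero by auto
qed

lemma aff_dim_side: "v \<in> {-1, 1} \<Longrightarrow> aff_dim (side v) = int DIM('a)"
proof -
  assume v: "v \<in> {-1, 1}"
  define U where "U = ball x0 radius \<inter> {y. 0 < of_int v * (grad \<bullet> (y - x0))}"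
  have "open U"
    unfolding U_def by (intro open_Int open_ball open_Collect_less continuous_intros)
  moreover have "side_point v \<in> U"
    using v side_point_in_ball radius(1) grad_nonzero
    by (auto simp: U_def inner_grad_side_point mult.assoc[symmetric])
  ultimately have "aff_dim U = int DIM('a)"
    by (intro aff_dim_open) auto
  moreover have "U \<subseteq> side v"
  proof
    fix y assume "y \<in> U"
    then have "y \<in> ball x0 radius" "0 \<le> of_int v * (grad \<bullet> (y - x0))"
      by (auto simp: U_def)
    then show "y \<in> side v"
      using side_ball_iff sgn_ok_if_mult_nonneg[OF v] by blast
  qed
  ultimately show ?thesis
    using aff_dim_subset[of U "side v"] aff_dim_le_DIM[of "side v"] by linarith
qed

lemma facet_eq_sides_inter: "\<sigma> = side 1 \<inter> side (-1)"
proof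
  show "\<sigma> \<subseteq> side 1 \<inter> side (-1)"
    using facet_subset_side[of "depth N"] by (simp add: side_def)
next
  show "side 1 \<inter> side (-1) \<subseteq> \<sigma>"
  proof
    fix y assume y: "y \<in> side 1 \<inter> side (-1)"
    show "y \<in> \<sigma>"
      unfolding \<sigma>_eq sign_cell_def mem_Collect_eq
    proof (intro allI impI)
      fix k j assume k: "1 \<le> k" "k \<le> depth N" "j < width N k"
      have pos: "sgn_ok (side_pattern 1 k j) (pre N k y j)"
        and neg: "sgn_ok (side_pattern (-1) k j) (pre N k y j)"
        using y k sign_cellD unfolding side_def by blast+
      show "sgn_ok (s k j) (pre N k y j)"
      proof (cases "(k, j) = (l, i)")
        case True
        then have "pre N k y j = 0"
          using pos neg by (auto simp: side_pattern_def sgn_ok_def)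
        then show ?thesis
          by simp
      next
        case False
        then have "side_pattern 1 k j = s k j"
          by (auto simp: side_pattern_def)
        then show ?thesis
          using pos by simp
      qed
    qed
  qed
qed

lemma sides_distinct: "side 1 \<noteq> side (-1)"
  using side_point_in_cell[OF x0_in_side[unfolded side_def], of 1] side_point_notin_facet[of 1]
  by (auto simp: facet_eq_sides_inter side_def side_pattern_def)

lemma unit_normal_side: "unit_normal \<sigma> (side 1) normal"
  unfolding unit_normal_def
proof (intro conjI ballI)
  fix a b assume "a \<in> \<sigma>" "b \<in> \<sigma>"
  then show "normal \<bullet> (a - b) = 0"
    using grad_orthogonal_facet[of a] grad_orthogonal_facet[of b]
    by (simp add: normal_def inner_diff_right)
next
  fix a p assume "a \<in> \<sigma>" "p \<in> side 1"
  then have "0 \<le> grad \<bullet> (p - a)"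
    using grad_orthogonal_facet[of a] sign_cell_subset_halfspace[OF x0_in_side[unfolded side_def], of p 1]
    by (simp add: side_def side_pattern_def sgn_ok_def inner_diff_right)
  then show "0 \<le> normal \<bullet> (p - a)"
    by (simp add: normal_def)
qed (rule norm_normal)

lemma tropical_witness_exists: "\<exists>P Q A B e. tropical_witness N \<sigma> P Q A B e"
proof -
  let ?A = "\<lambda>v j x. frozen_weight N (pos_set (side_pattern v)) (Suc (depth N)) j \<bullet> x"
  have "tropical_witness N \<sigma> (side 1) (side (-1)) (?A 1) (?A (-1)) normal"
    unfolding tropical_witness_def
    using side_in_cells[of 1] side_in_cells[of "-1"] aff_dim_side[of 1] aff_dim_side[of "-1"]
      sides_distinct facet_eq_sides_inter unit_normal_side
      lin_part_sign_cell[of N "side_pattern 1"] lin_part_sign_cell[of N "side_pattern (-1)"]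
    unfolding side_def by simp
  then show ?thesis
    by blast
qed

lemma full_dim_cell_bent_sign:
  assumes "sign_pattern t" "x0 \<in> sign_cell N t (depth N)" "aff_dim (sign_cell N t (depth N)) = int DIM('a)"
  shows "t l i \<in> {-1, 1}"
proof (rule ccontr)
  assume "t l i \<notin> {-1, 1}"
  then have "t l i = 0"
    using assms(1) by (auto simp: sign_pattern_def)
  then have "sign_cell N t (depth N) \<subseteq> {y. grad \<bullet> y = grad \<bullet> x0}"
    using sign_cell_subset_halfspace[OF assms(2)] by (auto simp: sgn_ok_def inner_diff_right)
  then have "aff_dim (sign_cell N t (depth N)) \<le> aff_dim {y. grad \<bullet> y = grad \<bullet> x0}"
    by (rule aff_dim_subset)
  also have "\<dots> = int DIM('a) - 1"
    using grad_nonzero by simp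
  finally show False
    using assms(3) by simp
qed

lemma adjacent_cells_opposite_signs:
  assumes "sign_pattern tP" "sign_pattern tQ"
    and "aff_dim (sign_cell N tP (depth N)) = int DIM('a)" "aff_dim (sign_cell N tQ (depth N)) = int DIM('a)"
    and "\<sigma> = sign_cell N tP (depth N) \<inter> sign_cell N tQ (depth N)"
  shows "tP l i \<in> {-1, 1}" "tQ l i = - tP l i"
proof -
  have x0: "x0 \<in> sign_cell N tP (depth N)" "x0 \<in> sign_cell N tQ (depth N)"
    using assms(5) x0_in_facet by auto
  show P: "tP l i \<in> {-1, 1}"
    by (rule full_dim_cell_bent_sign[OF assms(1) x0(1) assms(3)])
  have Q: "tQ l i \<in> {-1, 1}"
    by (rule full_dim_cell_bent_sign[OF assms(2) x0(2) assms(4)])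
  have "tQ l i \<noteq> tP l i"
  proof
    assume "tQ l i = tP l i"
    then have "side_point (tP l i) \<in> \<sigma>"
      using side_point_in_cell[OF x0(1) P] side_point_in_cell[OF x0(2) Q] assms(5) by simp
    then show False
      using side_point_notin_facet[OF P] by contradiction
  qed
  then show "tQ l i = - tP l i"
    using P Q by auto
qed

lemma unit_normal_orthogonal_kernel:
  assumes "x0 \<in> sign_cell N tP (depth N)" "x0 \<in> sign_cell N tQ (depth N)"
    and "\<sigma> = sign_cell N tP (depth N) \<inter> sign_cell N tQ (depth N)" "unit_normal \<sigma> P e" "grad \<bullet> w = 0"
  shows "e \<bullet> w = 0"
proof -
  obtain \<epsilon> where \<epsilon>: "\<epsilon> > 0" "x0 + \<epsilon> *\<^sub>R w \<in> ball x0 radius"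
    using convex_small_step[of UNIV x0 "x0 + w" radius] radius(1) by auto
  then have "x0 + \<epsilon> *\<^sub>R w \<in> \<sigma>"
    using sign_cell_ball_iff[OF assms(1)] sign_cell_ball_iff[OF assms(2)] assms(3,5) by simp
  then have "e \<bullet> (\<epsilon> *\<^sub>R w) = 0"
    using assms(4) x0_in_facet unfolding unit_normal_def by (metis add_diff_cancel_left')
  then show ?thesis
    using \<epsilon>(1) by simp
qed

lemma unit_normal_bent_sign:
  assumes "x0 \<in> sign_cell N t (depth N)" "t l i \<in> {-1, 1}" "unit_normal \<sigma> (sign_cell N t (depth N)) e"
  shows "0 \<le> of_int (t l i) * (grad \<bullet> e)"
proof -
  have "0 \<le> e \<bullet> (side_point (t l i) - x0)"
    using assms(3) x0_in_facet side_point_in_cell[OF assms(1,2)] unfolding unit_normal_def by blast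
  also have "e \<bullet> (side_point (t l i) - x0) = radius / (2 * norm grad) * (of_int (t l i) * (grad \<bullet> e))"
    using grad_nonzero by (simp add: side_point_def normal_def inner_commute field_simps)
  finally have "0 \<le> radius / (2 * norm grad) * (of_int (t l i) * (grad \<bullet> e))" .
  moreover have "0 < radius / (2 * norm grad)"
    using radius(1) grad_nonzero by simp
  ultimately show ?thesis
    by (meson zero_le_mult_iff not_le)
qed

lemma tropical_witness_points:
  assumes "tropical_witness N \<sigma> P Q A B e"
  shows "x0 + (radius / 2) *\<^sub>R e \<in> P \<inter> ball x0 radius" "x0 - (radius / 2) *\<^sub>R e \<in> Q \<inter> ball x0 radius"
    and "\<bar>grad \<bullet> e\<bar> = norm grad"
proof -
  obtain tP tQ where t: "sign_pattern tP" "P = sign_cell N tP (depth N)"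
    "sign_pattern tQ" "Q = sign_cell N tQ (depth N)"
    using assms cellsE unfolding tropical_witness_def by metis
  have wit: "aff_dim P = int DIM('a)" "aff_dim Q = int DIM('a)" "\<sigma> = P \<inter> Q" "unit_normal \<sigma> P e"
    using assms unfolding tropical_witness_def by auto
  have x0: "x0 \<in> P" "x0 \<in> Q"
    using wit(3) x0_in_facet by auto
  have signs: "tP l i \<in> {-1, 1}" "tQ l i = - tP l i"
    using adjacent_cells_opposite_signs[OF t(1,3)] wit t by simp_all
  have e: "norm e = 1"
    using wit(4) by (simp add: unit_normal_def)
  show "\<bar>grad \<bullet> e\<bar> = norm grad"
    using abs_inner_eq_norm_if_orthogonal_kernel[OF e grad_nonzero]
      unit_normal_orthogonal_kernel[of tP tQ P e] x0 wit t by simp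
  have sign_e: "0 \<le> of_int (tP l i) * (grad \<bullet> e)"
    using unit_normal_bent_sign[OF x0(1)[unfolded t(2)] signs(1)] wit(4) t(2) by simp
  have ball: "x0 + (radius / 2) *\<^sub>R e \<in> ball x0 radius" "x0 - (radius / 2) *\<^sub>R e \<in> ball x0 radius"
    using e radius(1) by (auto simp: dist_norm)
  have "sgn_ok (tP l i) (grad \<bullet> (x0 + (radius / 2) *\<^sub>R e - x0))"
    using sgn_ok_pos_mult_iff[of "radius / 2" "tP l i" "grad \<bullet> e"] radius(1)
      sgn_ok_if_mult_nonneg[OF signs(1) sign_e] by simp
  then show "x0 + (radius / 2) *\<^sub>R e \<in> P \<inter> ball x0 radius"
    using sign_cell_ball_iff[OF x0(1)[unfolded t(2)] ball(1)] ball(1) t(2) by blast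
  have "- tP l i \<in> {-1, 1}" "0 \<le> of_int (- tP l i) * - (grad \<bullet> e)"
    using signs(1) sign_e by auto
  then have "sgn_ok (tQ l i) (grad \<bullet> (x0 - (radius / 2) *\<^sub>R e - x0))"
    using sgn_ok_pos_mult_iff[of "radius / 2" "tQ l i" "- (grad \<bullet> e)"] radius(1) signs(2)
      sgn_ok_if_mult_nonneg[of "- tP l i" "- (grad \<bullet> e)"] by simp
  then show "x0 - (radius / 2) *\<^sub>R e \<in> Q \<inter> ball x0 radius"
    using sign_cell_ball_iff[OF x0(2)[unfolded t(4)] ball(2)] ball(2) t(4) by blast
qed

subsection \<open>Second differences along a segment through x0\<close>

lemma relu_second_difference:
  assumes "y1 \<in> ball x0 radius" "y2 \<in> ball x0 radius" "y1 + y2 = 2 *\<^sub>R x0"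
    and "1 \<le> k" "k \<le> depth N" "m < width N k"
  shows "max 0 (pre N k y1 m) + max 0 (pre N k y2 m) - 2 * max 0 (pre N k x0 m) =
    (if (k, m) = (l, i) then \<bar>pre N l y1 i\<bar>
     else if m \<in> Sset N \<sigma> k then pre N k y1 m + pre N k y2 m - 2 * pre N k x0 m else 0)"
proof (cases "(k, m) = (l, i)")
  case True
  have "y2 = 2 *\<^sub>R x0 - y1"
    using assms(3) by (simp add: eq_diff_eq add.commute)
  then have "y2 - x0 = - (y1 - x0)"
    by (simp add: scaleR_2)
  have "pre N l y2 i = grad \<bullet> (y2 - x0)"
    using pre_bent_neuron_in_ball assms(2) .
  also have "\<dots> = - pre N l y1 i"
    unfolding \<open>y2 - x0 = - (y1 - x0)\<close> using pre_bent_neuron_in_ball[OF assms(1)]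
    by (simp add: inner_diff_right)
  finally have "pre N l y2 i = - pre N l y1 i" .
  then show ?thesis
    using True pre_bent_neuron_eq_0[OF x0_in_facet] by (simp add: max_def)
next
  case False
  then show ?thesis
    unfolding if_not_P[OF False]
    using relu_in_ball[OF assms(1) assms(4-6) False] relu_in_ball[OF assms(2) assms(4-6) False]
      relu_in_ball[OF x0_in_ball assms(4-6) False]
    by simp
qed

lemma second_difference_below:
  assumes "y1 \<in> ball x0 radius" "y2 \<in> ball x0 radius" "y1 + y2 = 2 *\<^sub>R x0" "1 \<le> k" "k \<le> l"
  shows "pre N k y1 j + pre N k y2 j - 2 * pre N k x0 j = 0"
proof -
  let ?a = "frozen_weight N (Sset N \<sigma>) k j"
  have "?a \<bullet> y1 + ?a \<bullet> y2 = 2 * (?a \<bullet> x0)"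
    using arg_cong[OF assms(3), of "\<lambda>v. ?a \<bullet> v"] by (simp add: inner_add_right)
  then show ?thesis
    using pre_affine_in_ball[OF assms(1)] pre_affine_in_ball[OF assms(2)] pre_affine_in_ball[OF x0_in_ball]
      assms(4,5) by simp
qed

lemma second_difference_step:
  assumes "y1 \<in> ball x0 radius" "y2 \<in> ball x0 radius" "y1 + y2 = 2 *\<^sub>R x0" "l + d \<le> depth N"
    and "\<And>m. d \<noteq> 0 \<Longrightarrow> m \<in> Sset N \<sigma> (l + d) \<Longrightarrow>
      pre N (l + d) y1 m + pre N (l + d) y2 m - 2 * pre N (l + d) x0 m =
      \<bar>pre N l y1 i\<bar> * fwdv N (Sset N \<sigma>) l i d m"
  shows "pre N (l + Suc d) y1 j + pre N (l + Suc d) y2 j - 2 * pre N (l + Suc d) x0 j =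
    \<bar>pre N l y1 i\<bar> * fwdv N (Sset N \<sigma>) l i (Suc d) j"
proof -
  let ?a = "\<bar>pre N l y1 i\<bar>"
  have relu: "max 0 (pre N (l + d) y1 m) + max 0 (pre N (l + d) y2 m) - 2 * max 0 (pre N (l + d) x0 m) =
      ?a * (if d = 0 \<or> m \<in> Sset N \<sigma> (l + d) then fwdv N (Sset N \<sigma>) l i d m else 0)"
    if "m < width N (l + d)" for m
    using relu_second_difference[OF assms(1-3), of "l + d" m] second_difference_below[OF assms(1-3), of l m]
      assms(4,5) that layer by auto
  have "pre N (l + Suc d) y1 j + pre N (l + Suc d) y2 j - 2 * pre N (l + Suc d) x0 j =
      (\<Sum>m<width N (l + d). Wt N (l + d + 1) j m *
        (max 0 (pre N (l + d) y1 m) + max 0 (pre N (l + d) y2 m) - 2 * max 0 (pre N (l + d) x0 m)))"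
    using pre_Suc_second_difference[of "l + d"] layer by simp
  also have "\<dots> = ?a * fwdv N (Sset N \<sigma>) l i (Suc d) j"
    using relu by (simp add: sum_distrib_left algebra_simps)
  finally show ?thesis .
qed

lemma second_difference_above:
  assumes "y1 \<in> ball x0 radius" "y2 \<in> ball x0 radius" "y1 + y2 = 2 *\<^sub>R x0" "l + d \<le> depth N"
  shows "pre N (l + Suc d) y1 j + pre N (l + Suc d) y2 j - 2 * pre N (l + Suc d) x0 j =
    \<bar>pre N l y1 i\<bar> * fwdv N (Sset N \<sigma>) l i (Suc d) j"
  using assms(4)
proof (induction d arbitrary: j)
  case 0
  then show ?case
    by (intro second_difference_step[OF assms(1-3)]) auto
next
  case (Suc d)
  show ?case
  proof (rule second_difference_step[OF assms(1-3) Suc.prems])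
    fix m
    show "pre N (l + Suc d) y1 m + pre N (l + Suc d) y2 m - 2 * pre N (l + Suc d) x0 m =
        \<bar>pre N l y1 i\<bar> * fwdv N (Sset N \<sigma>) l i (Suc d) m"
      using Suc by simp
  qed
qed

lemma output_second_difference:
  assumes "y1 \<in> ball x0 radius" "y2 \<in> ball x0 radius" "y1 + y2 = 2 *\<^sub>R x0"
  shows "fnet N y1 j + fnet N y2 j - 2 * fnet N x0 j = \<bar>pre N l y1 i\<bar> * fwd_output N (Sset N \<sigma>) l i j"
  using second_difference_above[OF assms, of "depth N - l" j] layer
  by (simp add: fnet_def fwd_output_def Suc_diff_le)

lemma tropical_witness_value:
  assumes "tropical_witness N \<sigma> P Q A B e" "j < width N (Suc (depth N))"
  shows "A j e - B j e = norm grad * fwd_output N (Sset N \<sigma>) l i j"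
proof -
  define t where "t = radius / 2"
  have t: "t > 0"
    using radius(1) by (simp add: t_def)
  define y1 y2 where "y1 = x0 + t *\<^sub>R e" and "y2 = x0 - t *\<^sub>R e"
  have y: "y1 \<in> P" "y1 \<in> ball x0 radius" "y2 \<in> Q" "y2 \<in> ball x0 radius" "\<bar>grad \<bullet> e\<bar> = norm grad"
    using tropical_witness_points[OF assms(1)] by (auto simp: y1_def y2_def t_def)
  have x0: "x0 \<in> P" "x0 \<in> Q"
    using assms(1) x0_in_facet by (auto simp: tropical_witness_def)
  have "lin_part N P A" "lin_part N Q B"
    using assms(1) by (auto simp: tropical_witness_def)
  then obtain bP bQ where lin: "linear (A j)" "linear (B j)"
    and bP: "\<forall>x\<in>P. fnet N x j = A j x + bP j" and bQ: "\<forall>x\<in>Q. fnet N x j = B j x + bQ j"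
    using assms(2) unfolding lin_part_def by blast
  have "A j y1 = A j x0 + t * A j e" "B j y2 = B j x0 - t * B j e"
    using lin by (simp_all add: y1_def y2_def linear_add linear_diff linear_scale)
  then have "t * (A j e - B j e) = fnet N y1 j + fnet N y2 j - 2 * fnet N x0 j"
    using bP[rule_format, OF y(1)] bP[rule_format, OF x0(1)] bQ[rule_format, OF y(3)]
      bQ[rule_format, OF x0(2)]
    by (simp add: algebra_simps)
  also have "\<dots> = t * (norm grad * fwd_output N (Sset N \<sigma>) l i j)"
    using output_second_difference[OF y(2,4)] pre_bent_neuron_in_ball[OF y(2)] y(5) t
    by (simp add: y1_def y2_def scaleR_2 abs_mult)
  finally show ?thesis
    using t by simp
qed

end

theorem mainTheorem10:
  fixes N :: "('a::euclidean_space) net" and \<sigma> :: "'a set" and l i :: nat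
  assumes "supertransversal N"
    and "\<sigma> \<in> cells N" and "aff_dim \<sigma> = int DIM('a) - 1"
    and "1 \<le> l" and "l \<le> depth N" and "i < width N l" and "\<sigma> \<subseteq> bent N l i"
  shows "\<forall>j < width N (Suc (depth N)).
           trop_weight N \<sigma> j
             = norm (back_input N (Sset N \<sigma>) l i) * fwd_output N (Sset N \<sigma>) l i j"
proof -
  obtain s where s: "sign_pattern s" "\<sigma> = sign_cell N s (depth N)"
    using cellsE[OF assms(2)] .
  have "\<sigma> \<noteq> {}"
    using assms(2) by (simp add: cells_def)
  then obtain x0 where "x0 \<in> rel_interior \<sigma>"
    using rel_interior_eq_empty convex_sign_cell s(2) by blast
  then interpret bent_facet N \<sigma> l i s x0
    using assms(3-7) s supertransversal_facet_unique_bent[OF assms(1-7)] by unfold_locales blast+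
  have "grad = back_input N (Sset N \<sigma>) l i"
    unfolding grad_def using frozen_weight_eq_back_input assms(4,6) .
  moreover have "trop_weight N \<sigma> j = norm grad * fwd_output N (Sset N \<sigma>) l i j"
    if "j < width N (Suc (depth N))" for j
    by (rule trop_weight_eqI[OF tropical_witness_exists _ that]) (rule tropical_witness_value)
  ultimately show ?thesis
    by simp
qed

end
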